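(* Let $k\ge 1$ and $d,n_1,\dots,n_k\ge 1$ be integers. Let $G_1\in\mathbb{R}^{n_1\times d},\dots,G_k\in\mathbb{R}^{n_k\times d}$, $\gamma_1,\dots,\gamma_k\in\mathbb{R}$, $g_1,\dots,g_k\in\mathbb{R}^d$, $h_1\in\mathbb{R}^{n_1},\dots,h_k\in\mathbb{R}^{n_k}$ be mutually independent, each with i.i.d. $\mathcal{N}(0,1)$ entries. Let $\alpha_1,\dots,\alpha_k:\mathbb{R}^d\to\mathbb{R}^d$ and $\beta_\ell:\mathbb{R}^{n_\ell}\to\mathbb{R}^{n_\ell}$ ($\ell=1,\dots,k$) be arbitrary (deterministic) functions. Let $I,J_1,\dots,J_k$ be finite sets, $\{w_i\}_{i\in I}\subset\mathbb{R}^d$, and $\{v_{j_\ell}\}_{j_\ell\in J_\ell}\subset\mathbb{R}^{n_\ell}$ for each $\ell$. Put $J=J_1\times\dots\times J_k$, and for $j=(j_1,\dots,j_k)\in J$ write $v_{j\ell}:=v_{j_\ell}$. Define, for $i\in I$, $j\in J$, $$Y_{ij}=\sum_{\ell=1}^k\Big[\beta_\ell(v_{j\ell})^TG_\ell\,\alpha_\ell(w_i)+\gamma_\ell\,\|\alpha_\ell(w_i)\|_2\,\|\beta_\ell(v_{j\ell})\|_2\Big],$$ $$X_{ij}=\sum_{\ell=1}^k\Big[\|\beta_\ell(v_{j\ell})\|_2\,\alpha_\ell(w_i)^Tg_\ell+\|\alpha_\ell(w_i)\|_2\,h_\ell^T\beta_\ell(v_{j\ell})\Big].$$ Then $(X_{ij})$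 and $(Y_{ij})$ are centered Gaussian processes on $I\times J$ satisfying: (1) $\mathbb{E}X_{ij}^2=\mathbb{E}Y_{ij}^2$ for all $i\in I,j\in J$; (2) $\mathbb{E}X_{ij}X_{ij'}\ge\mathbb{E}Y_{ij}Y_{ij'}$ for all $i\in I$, $j,j'\in J$; (3) $\mathbb{E}X_{ij}X_{i'j'}\le\mathbb{E}Y_{ij}Y_{i'j'}$ for all $i\ne i'\in I$, $j,j'\in J$. Moreover, the processes $\tilde X_{ji}:=X_{ij}$ and $\tilde Y_{ji}:=Y_{ij}$ indexed by $J\times I$ satisfy the same three conditions with the roles of the index sets exchanged, i.e. $\mathbb{E}\tilde X_{ji}^2=\mathbb{E}\tilde Y_{ji}^2$; $\mathbb{E}\tilde X_{ji}\tilde X_{ji'}\ge\mathbb{E}\tilde Y_{ji}\tilde Y_{ji'}$ for all $j\in J$, $i,i'\in I$; and $\mathbb{E}\tilde X_{ji}\tilde X_{j'i'}\le\mathbb{E}\tilde Y_{ji}\tilde Y_{j'i'}$ for all $j\ne j'\in J$, $i,i'\in I$.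
   Context: All norms $\|\cdot\|_2$ are Euclidean norms. *)

theory Defs
  imports "HOL-Probability.Probability"
begin

text \<open>Index type for the scalar Gaussian entries:
  IG l a b = entry (a,b) of G_l, Igam l = gamma_l, Ig l b = entry b of g_l,
  Ih l a = entry a of h_l.\<close>
datatype gidx = IG nat nat nat | Igam nat | Ig nat nat | Ih nat nat

definition gidx_set :: "nat \<Rightarrow> nat \<Rightarrow> (nat \<Rightarrow> nat) \<Rightarrow> gidx set" where
  "gidx_set k d n =
     {IG l a b | l a b. l \<in> {1..k} \<and> a < n l \<and> b < d}
   \<union> {Igam l | l. l \<in> {1..k}}
   \<union> {Ig l b | l b. l \<in> {1..k} \<and> b < d}
   \<union> {Ih l a | l a. l \<in> {1..k} \<and> a < n l}"

definition vnorm :: "nat \<Rightarrow> (nat \<Rightarrow> real) \<Rightarrow> real" where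
  "vnorm m x = sqrt (\<Sum>a<m. (x a)\<^sup>2)"

definition centered_normal_rv :: "'a measure \<Rightarrow> ('a \<Rightarrow> real) \<Rightarrow> bool" where
  "centered_normal_rv M Z \<longleftrightarrow>
     Z \<in> borel_measurable M \<and>
     ((\<exists>\<sigma>>0. distributed M lborel Z (normal_density 0 \<sigma>)) \<or> (AE \<omega> in M. Z \<omega> = 0))"

definition centered_gaussian_process :: "'a measure \<Rightarrow> 't set \<Rightarrow> ('t \<Rightarrow> 'a \<Rightarrow> real) \<Rightarrow> bool" where
  "centered_gaussian_process M T X \<longleftrightarrow>
     (\<forall>t\<in>T. X t \<in> borel_measurable M) \<and>
     (\<forall>F c. finite F \<longrightarrow> F \<subseteq> T \<longrightarrow>
        centered_normal_rv M (\<lambda>\<omega>. \<Sum>t\<in>F. c t * X t \<omega>))"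

end

theory Submission
  imports Defs
begin

text \<open>Both processes are linear combinations of one i.i.d. standard Gaussian family, so they
  are centered Gaussian and their covariances are inner products of coefficient vectors. With
  \<open>a, a'\<close> the \<open>\<ell>\<close>-th images of \<open>w\<^sub>i, w\<^sub>i\<^sub>'\<close> and \<open>b, b'\<close> those of \<open>v\<^sub>j, v\<^sub>j\<^sub>'\<close>, block \<open>\<ell>\<close> contributes
  \<open>|b||b'|\<langle>a,a'\<rangle> + |a||a'|\<langle>b,b'\<rangle>\<close> to the covariance of \<open>X\<close> and \<open>\<langle>a,a'\<rangle>\<langle>b,b'\<rangle> + |a||a'||b||b'|\<close> to
  that of \<open>Y\<close>. The difference is \<open>-(|a||a'| - \<langle>a,a'\<rangle>)(|b||b'| - \<langle>b,b'\<rangle>)\<close>: non-positive by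
  Cauchy-Schwarz, and zero when \<open>i = i'\<close> or \<open>j = j'\<close>.\<close>

lemma gidx_set_decompose:
  "gidx_set k d n =
     (\<lambda>(l, p, q). IG l p q) ` (SIGMA l:{1..k}. {..<n l} \<times> {..<d})
   \<union> Igam ` {1..k}
   \<union> (\<lambda>(l, q). Ig l q) ` (SIGMA l:{1..k}. {..<d})
   \<union> (\<lambda>(l, p). Ih l p) ` (SIGMA l:{1..k}. {..<n l})"
  unfolding gidx_set_def by force

lemma finite_gidx_set: "finite (gidx_set k d n)"
  by (simp add: gidx_set_decompose)

lemma sum_gidx_set:
  "(\<Sum>g\<in>gidx_set k d n. f g) = (\<Sum>l\<in>{1..k}. (\<Sum>p<n l. \<Sum>q<d. f (IG l p q)) + f (Igam l)
      + (\<Sum>q<d. f (Ig l q)) + (\<Sum>p<n l. f (Ih l p)))"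
  unfolding gidx_set_decompose
  by (subst sum.union_disjoint; (auto)?)+
    (simp add: sum.reindex inj_on_def sum.distrib prod.case_distrib flip: sum.Sigma sum.cartesian_product)

definition vinner :: "nat \<Rightarrow> (nat \<Rightarrow> real) \<Rightarrow> (nat \<Rightarrow> real) \<Rightarrow> real" where
  "vinner m x y = (\<Sum>q<m. x q * y q)"

lemma vinner_self: "vinner m x x = (vnorm m x)\<^sup>2"
  by (simp add: vinner_def vnorm_def sum_nonneg power2_eq_square)

lemma vinner_le_vnorm_mult: "vinner m x y \<le> vnorm m x * vnorm m y"
proof -
  have "vinner m x y \<le> (\<Sum>q<m. \<bar>x q\<bar> * \<bar>y q\<bar>)"
    unfolding vinner_def by (intro sum_mono) (metis abs_ge_self abs_mult)
  also have "\<dots> \<le> L2_set x {..<m} * L2_set y {..<m}"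
    by (rule L2_set_mult_ineq)
  finally show ?thesis
    by (simp add: vnorm_def L2_set_def)
qed

text \<open>Coefficients of \<open>X\<^sub>i\<^sub>j\<close> and \<open>Y\<^sub>i\<^sub>j\<close> on the Gaussian family \<open>Z\<close>, where block \<open>l\<close> of \<open>a\<close> is
  \<open>\<alpha>\<^sub>l(w\<^sub>i)\<close> and block \<open>l\<close> of \<open>b\<close> is \<open>\<beta>\<^sub>l(v\<^sub>j\<^sub>l)\<close>.\<close>

definition gordon_X_coeff ::
    "nat \<Rightarrow> (nat \<Rightarrow> nat) \<Rightarrow> (nat \<Rightarrow> nat \<Rightarrow> real) \<Rightarrow> (nat \<Rightarrow> nat \<Rightarrow> real) \<Rightarrow> gidx \<Rightarrow> real" where
  "gordon_X_coeff d n a b g = (case g of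
      Ig l q \<Rightarrow> vnorm (n l) (b l) * a l q
    | Ih l p \<Rightarrow> vnorm d (a l) * b l p
    | _ \<Rightarrow> 0)"

definition gordon_Y_coeff ::
    "nat \<Rightarrow> (nat \<Rightarrow> nat) \<Rightarrow> (nat \<Rightarrow> nat \<Rightarrow> real) \<Rightarrow> (nat \<Rightarrow> nat \<Rightarrow> real) \<Rightarrow> gidx \<Rightarrow> real" where
  "gordon_Y_coeff d n a b g = (case g of
      IG l p q \<Rightarrow> b l p * a l q
    | Igam l \<Rightarrow> vnorm d (a l) * vnorm (n l) (b l)
    | _ \<Rightarrow> 0)"

lemma sum_gordon_X_coeff:
  "(\<Sum>g\<in>gidx_set k d n. gordon_X_coeff d n a b g * z g) =
     (\<Sum>l\<in>{1..k}. vnorm (n l) (b l) * (\<Sum>q<d. a l q * z (Ig l q))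
        + vnorm d (a l) * (\<Sum>p<n l. z (Ih l p) * b l p))"
  by (simp add: sum_gidx_set gordon_X_coeff_def sum_distrib_left mult_ac)

lemma sum_gordon_Y_coeff:
  "(\<Sum>g\<in>gidx_set k d n. gordon_Y_coeff d n a b g * z g) =
     (\<Sum>l\<in>{1..k}. (\<Sum>p<n l. \<Sum>q<d. b l p * z (IG l p q) * a l q)
        + z (Igam l) * vnorm d (a l) * vnorm (n l) (b l))"
  by (simp add: sum_gidx_set gordon_Y_coeff_def mult_ac)

lemma gordon_X_coeff_inner:
  "(\<Sum>g\<in>gidx_set k d n. gordon_X_coeff d n a b g * gordon_X_coeff d n a' b' g) =
     (\<Sum>l\<in>{1..k}. vnorm (n l) (b l) * vnorm (n l) (b' l) * vinner d (a l) (a' l)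
        + vnorm d (a l) * vnorm d (a' l) * vinner (n l) (b l) (b' l))"
  by (simp add: sum_gidx_set gordon_X_coeff_def vinner_def sum_distrib_left mult_ac)

lemma gordon_Y_coeff_inner:
  "(\<Sum>g\<in>gidx_set k d n. gordon_Y_coeff d n a b g * gordon_Y_coeff d n a' b' g) =
     (\<Sum>l\<in>{1..k}. vinner (n l) (b l) (b' l) * vinner d (a l) (a' l)
        + vnorm d (a l) * vnorm d (a' l) * (vnorm (n l) (b l) * vnorm (n l) (b' l)))"
  by (simp add: sum_gidx_set gordon_Y_coeff_def vinner_def sum_distrib_left sum_distrib_right
      sum_product mult_ac)

lemma gordon_coeff_inner_diff:
  "(\<Sum>g\<in>gidx_set k d n. gordon_X_coeff d n a b g * gordon_X_coeff d n a' b' g)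
   - (\<Sum>g\<in>gidx_set k d n. gordon_Y_coeff d n a b g * gordon_Y_coeff d n a' b' g) =
   - (\<Sum>l\<in>{1..k}. (vnorm d (a l) * vnorm d (a' l) - vinner d (a l) (a' l))
        * (vnorm (n l) (b l) * vnorm (n l) (b' l) - vinner (n l) (b l) (b' l)))"
  unfolding gordon_X_coeff_inner gordon_Y_coeff_inner sum_subtractf[symmetric] sum_negf[symmetric]
  by (intro sum.cong refl) (simp add: algebra_simps)

lemma gordon_X_coeff_inner_le_Y:
  "(\<Sum>g\<in>gidx_set k d n. gordon_X_coeff d n a b g * gordon_X_coeff d n a' b' g)
   \<le> (\<Sum>g\<in>gidx_set k d n. gordon_Y_coeff d n a b g * gordon_Y_coeff d n a' b' g)"
proof -
  have "0 \<le> (\<Sum>l\<in>{1..k}. (vnorm d (a l) * vnorm d (a' l) - vinner d (a l) (a' l))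
        * (vnorm (n l) (b l) * vnorm (n l) (b' l) - vinner (n l) (b l) (b' l)))"
    by (intro sum_nonneg mult_nonneg_nonneg) (simp_all add: vinner_le_vnorm_mult)
  then show ?thesis
    using gordon_coeff_inner_diff[of d n a b a' b' k] by linarith
qed

lemma gordon_X_coeff_inner_eq_Y:
  assumes "a = a' \<or> b = b'"
  shows "(\<Sum>g\<in>gidx_set k d n. gordon_X_coeff d n a b g * gordon_X_coeff d n a' b' g)
       = (\<Sum>g\<in>gidx_set k d n. gordon_Y_coeff d n a b g * gordon_Y_coeff d n a' b' g)"
  using gordon_coeff_inner_diff[of d n a b a' b' k] assms
  by (auto simp: vinner_self power2_eq_square)

lemma centered_normal_rv_AE_cong:
  assumes "centered_normal_rv M X" "AE \<omega> in M. X \<omega> = Y \<omega>" "Y \<in> borel_measurable M"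
  shows "centered_normal_rv M Y"
proof -
  have "distributed M lborel Y f" if "distributed M lborel X f" for f
    using that assms(2,3) distr_cong_AE[of M M lborel lborel X Y] by (auto simp: distributed_def)
  moreover have "AE \<omega> in M. Y \<omega> = 0" if "AE \<omega> in M. X \<omega> = 0"
    using that assms(2) by eventually_elim simp
  ultimately show ?thesis
    using assms(1,3) unfolding centered_normal_rv_def by blast
qed

context prob_space
begin

lemma centered_normal_rv_add_indep:
  assumes indep: "indep_var borel X borel W"
    and X: "centered_normal_rv M X" and W: "centered_normal_rv M W"
  shows "centered_normal_rv M (\<lambda>\<omega>. X \<omega> + W \<omega>)"
proof -
  have sum_meas: "(\<lambda>\<omega>. X \<omega> + W \<omega>) \<in> borel_measurable M"
    using X W unfolding centered_normal_rv_def by (intro borel_measurable_add) auto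
  from X W consider
      (normal) \<sigma> \<tau> where "\<sigma> > 0" "\<tau> > 0" "distributed M lborel X (normal_density 0 \<sigma>)"
        "distributed M lborel W (normal_density 0 \<tau>)"
    | (X_zero) "AE \<omega> in M. X \<omega> = 0"
    | (W_zero) "AE \<omega> in M. W \<omega> = 0"
    unfolding centered_normal_rv_def by blast
  then show ?thesis
  proof cases
    case normal
    then have "distributed M lborel (\<lambda>\<omega>. X \<omega> + W \<omega>)
        (normal_density (0 + 0) (sqrt (\<sigma>\<^sup>2 + \<tau>\<^sup>2)))"
      by (intro add_indep_normal[OF indep]) simp_all
    moreover have "sqrt (\<sigma>\<^sup>2 + \<tau>\<^sup>2) > 0"
      using normal by (simp add: add_pos_pos)
    ultimately show ?thesis
      using sum_meas unfolding centered_normal_rv_def by auto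
  next
    case X_zero
    then show ?thesis
      by (intro centered_normal_rv_AE_cong[OF W _ sum_meas]) auto
  next
    case W_zero
    then show ?thesis
      by (intro centered_normal_rv_AE_cong[OF X _ sum_meas]) auto
  qed
qed

lemma centered_normal_rv_scaled_std_normal:
  assumes "distributed M lborel Z std_normal_density"
  shows "centered_normal_rv M (\<lambda>\<omega>. c * Z \<omega>)"
proof (cases "c = 0")
  case True
  then show ?thesis by (simp add: centered_normal_rv_def)
next
  case False
  with normal_density_affine[OF assms, of c 0]
  have "distributed M lborel (\<lambda>\<omega>. c * Z \<omega>) (normal_density 0 \<bar>c\<bar>)"
    by simp
  with False show ?thesis
    unfolding centered_normal_rv_def using distributed_measurable by fastforce
qed

lemma std_normal_moments:
  assumes "distributed M lborel X std_normal_density"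
  shows "integrable M X" "integrable M (\<lambda>\<omega>. X \<omega> * X \<omega>)"
    "expectation X = 0" "expectation (\<lambda>\<omega>. X \<omega> * X \<omega>) = 1"
proof -
  show "integrable M X"
    using distributed_integrable_var[OF assms] integrable_std_normal_moment[of 1] by simp
  show "integrable M (\<lambda>\<omega>. X \<omega> * X \<omega>)"
    using distributed_integrable[OF assms, of "\<lambda>x. x * x"] integrable_std_normal_moment[of 2]
    by (simp add: power2_eq_square)
  show "expectation X = 0"
    by (rule standard_normal_distributed_expectation[OF assms])
  with standard_normal_distributed_variance[OF assms]
  show "expectation (\<lambda>\<omega>. X \<omega> * X \<omega>) = 1"
    by (simp add: power2_eq_square)
qed

context
  fixes Z :: "'i \<Rightarrow> 'a \<Rightarrow> real" and S :: "'i set"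
  assumes indep: "indep_vars (\<lambda>_. borel) Z S"
    and std: "\<And>g. g \<in> S \<Longrightarrow> distributed M lborel (Z g) std_normal_density"
begin

lemma indep_std_normal_mult:
  assumes "g \<in> S" "h \<in> S"
  shows "integrable M (\<lambda>\<omega>. Z g \<omega> * Z h \<omega>)
    \<and> expectation (\<lambda>\<omega>. Z g \<omega> * Z h \<omega>) = (if g = h then 1 else 0)"
proof (cases "g = h")
  case True
  then show ?thesis using std_normal_moments[OF std[OF assms(1)]] by simp
next
  case False
  have "indep_vars (\<lambda>_. borel) Z (insert g {h})"
    by (rule indep_vars_subset[OF indep]) (use assms in auto)
  with False have gh: "indep_var borel (Z g) borel (Z h)"
    using indep_vars_sum[of "{h}" g Z] by simp
  show ?thesis
    using indep_var_lebesgue_integral[OF gh] indep_var_integrable[OF gh]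
      std_normal_moments[OF std[OF assms(1)]] std_normal_moments[OF std[OF assms(2)]] False
    by simp
qed

lemma expectation_lincomb_mult:
  assumes "finite S"
  shows "expectation (\<lambda>\<omega>. (\<Sum>g\<in>S. c g * Z g \<omega>) * (\<Sum>h\<in>S. c' h * Z h \<omega>))
       = (\<Sum>g\<in>S. c g * c' g)"
proof -
  have "expectation (\<lambda>\<omega>. (\<Sum>g\<in>S. c g * Z g \<omega>) * (\<Sum>h\<in>S. c' h * Z h \<omega>))
      = expectation (\<lambda>\<omega>. \<Sum>g\<in>S. \<Sum>h\<in>S. c g * c' h * (Z g \<omega> * Z h \<omega>))"
    by (simp add: sum_product mult_ac)
  also have "\<dots> = (\<Sum>g\<in>S. \<Sum>h\<in>S. c g * c' h * (if g = h then 1 else 0))"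
    by (simp add: Bochner_Integration.integral_sum indep_std_normal_mult)
  also have "\<dots> = (\<Sum>g\<in>S. c g * c' g)"
    using assms by (simp add: if_distrib sum.delta cong: if_cong)
  finally show ?thesis .
qed

lemma borel_measurable_lincomb:
  assumes "F \<subseteq> S"
  shows "(\<lambda>\<omega>. \<Sum>g\<in>F. c g * Z g \<omega>) \<in> borel_measurable M"
proof -
  have "Z g \<in> borel_measurable M" if "g \<in> F" for g
    using distributed_measurable[OF std] that assms by auto
  then show ?thesis
    by (intro borel_measurable_sum borel_measurable_times) auto
qed

lemma centered_normal_rv_lincomb:
  assumes "finite S" "F \<subseteq> S"
  shows "centered_normal_rv M (\<lambda>\<omega>. \<Sum>g\<in>F. c g * Z g \<omega>)"
  using finite_subset[OF assms(2,1)] assms(2)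
proof (induction F rule: finite_induct)
  case empty
  show ?case by (simp add: centered_normal_rv_def)
next
  case (insert x F)
  have "indep_vars (\<lambda>_. borel) (\<lambda>g \<omega>. c g * Z g \<omega>) (insert x F)"
    by (rule indep_vars_compose2[OF indep_vars_subset[OF indep insert.prems]]) simp
  from indep_vars_sum[OF insert.hyps(1,2) this]
  have "indep_var borel (\<lambda>\<omega>. c x * Z x \<omega>) borel (\<lambda>\<omega>. \<Sum>g\<in>F. c g * Z g \<omega>)"
    by simp
  moreover have "centered_normal_rv M (\<lambda>\<omega>. c x * Z x \<omega>)"
    using insert.prems by (intro centered_normal_rv_scaled_std_normal std) auto
  ultimately show ?case
    using centered_normal_rv_add_indep insert by simp
qed

lemma centered_gaussian_process_lincomb:
  assumes "finite S" and X: "\<And>t \<omega>. t \<in> T \<Longrightarrow> X t \<omega> = (\<Sum>g\<in>S. C t g * Z g \<omega>)"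
  shows "centered_gaussian_process M T X"
  unfolding centered_gaussian_process_def
proof (intro conjI ballI allI impI)
  fix t assume "t \<in> T"
  then have "X t = (\<lambda>\<omega>. \<Sum>g\<in>S. C t g * Z g \<omega>)"
    using X by auto
  then show "X t \<in> borel_measurable M"
    using borel_measurable_lincomb by simp
next
  fix F c assume "finite F" "F \<subseteq> T"
  then have "(\<lambda>\<omega>. \<Sum>t\<in>F. c t * X t \<omega>) = (\<lambda>\<omega>. \<Sum>g\<in>S. (\<Sum>t\<in>F. c t * C t g) * Z g \<omega>)"
    using X by (auto simp: subset_iff sum_distrib_left sum_distrib_right mult.assoc intro!: sum.swap)
  then show "centered_normal_rv M (\<lambda>\<omega>. \<Sum>t\<in>F. c t * X t \<omega>)"
    using centered_normal_rv_lincomb[OF assms(1) subset_refl] by simp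
qed

end

end

theorem lemma4p1:
  fixes M :: "'a measure"
    and k d :: nat and n :: "nat \<Rightarrow> nat"
    and Z :: "gidx \<Rightarrow> 'a \<Rightarrow> real"
    and \<alpha> \<beta> :: "nat \<Rightarrow> (nat \<Rightarrow> real) \<Rightarrow> (nat \<Rightarrow> real)"
    and I :: "'i set" and J :: "nat \<Rightarrow> 'j set"
    and w :: "'i \<Rightarrow> (nat \<Rightarrow> real)"
    and v :: "nat \<Rightarrow> 'j \<Rightarrow> (nat \<Rightarrow> real)"
    and X Y :: "'i \<Rightarrow> (nat \<Rightarrow> 'j) \<Rightarrow> 'a \<Rightarrow> real"
  assumes M: "prob_space M"
    and k: "k \<ge> 1" and d: "d \<ge> 1" and n: "\<And>l. l \<in> {1..k} \<Longrightarrow> n l \<ge> 1"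
    and indep: "prob_space.indep_vars M (\<lambda>_. borel) Z (gidx_set k d n)"
    and std: "\<And>x. x \<in> gidx_set k d n \<Longrightarrow> distributed M lborel (Z x) std_normal_density"
    and finI: "finite I" and finJ: "\<And>l. l \<in> {1..k} \<Longrightarrow> finite (J l)"
    and Ydef: "\<And>i j \<omega>. Y i j \<omega> = (\<Sum>l\<in>{1..k}.
          (\<Sum>a<n l. \<Sum>b<d. \<beta> l (v l (j l)) a * Z (IG l a b) \<omega> * \<alpha> l (w i) b)
          + Z (Igam l) \<omega> * vnorm d (\<alpha> l (w i)) * vnorm (n l) (\<beta> l (v l (j l))))"
    and Xdef: "\<And>i j \<omega>. X i j \<omega> = (\<Sum>l\<in>{1..k}.
          vnorm (n l) (\<beta> l (v l (j l))) * (\<Sum>b<d. \<alpha> l (w i) b * Z (Ig l b) \<omega>)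
          + vnorm d (\<alpha> l (w i)) * (\<Sum>a<n l. Z (Ih l a) \<omega> * \<beta> l (v l (j l)) a))"
  shows "centered_gaussian_process M (I \<times> Pi\<^sub>E {1..k} J) (\<lambda>(i, j). X i j)
       \<and> centered_gaussian_process M (I \<times> Pi\<^sub>E {1..k} J) (\<lambda>(i, j). Y i j)
       \<and> (\<forall>i\<in>I. \<forall>j\<in>Pi\<^sub>E {1..k} J.
            prob_space.expectation M (\<lambda>\<omega>. (X i j \<omega>)\<^sup>2)
              = prob_space.expectation M (\<lambda>\<omega>. (Y i j \<omega>)\<^sup>2))
       \<and> (\<forall>i\<in>I. \<forall>j\<in>Pi\<^sub>E {1..k} J. \<forall>j'\<in>Pi\<^sub>E {1..k} J.
            prob_space.expectation M (\<lambda>\<omega>. X i j \<omega> * X i j' \<omega>)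
              \<ge> prob_space.expectation M (\<lambda>\<omega>. Y i j \<omega> * Y i j' \<omega>))
       \<and> (\<forall>i\<in>I. \<forall>i'\<in>I. \<forall>j\<in>Pi\<^sub>E {1..k} J. \<forall>j'\<in>Pi\<^sub>E {1..k} J. i \<noteq> i' \<longrightarrow>
            prob_space.expectation M (\<lambda>\<omega>. X i j \<omega> * X i' j' \<omega>)
              \<le> prob_space.expectation M (\<lambda>\<omega>. Y i j \<omega> * Y i' j' \<omega>))
       \<and> (\<forall>j\<in>Pi\<^sub>E {1..k} J. \<forall>i\<in>I. \<forall>i'\<in>I.
            prob_space.expectation M (\<lambda>\<omega>. X i j \<omega> * X i' j \<omega>)
              \<ge> prob_space.expectation M (\<lambda>\<omega>. Y i j \<omega> * Y i' j \<omega>))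
       \<and> (\<forall>j\<in>Pi\<^sub>E {1..k} J. \<forall>j'\<in>Pi\<^sub>E {1..k} J. \<forall>i\<in>I. \<forall>i'\<in>I. j \<noteq> j' \<longrightarrow>
            prob_space.expectation M (\<lambda>\<omega>. X i j \<omega> * X i' j' \<omega>)
              \<le> prob_space.expectation M (\<lambda>\<omega>. Y i j \<omega> * Y i' j' \<omega>))"
proof -
  interpret prob_space M by (rule M)
  let ?S = "gidx_set k d n"
  define a where "a i l = \<alpha> l (w i)" for i l
  define b where "b j l = \<beta> l (v l (j l))" for j l
  define CX where "CX i j = gordon_X_coeff d n (a i) (b j)" for i j
  define CY where "CY i j = gordon_Y_coeff d n (a i) (b j)" for i j
  have X_lincomb: "X i j \<omega> = (\<Sum>g\<in>?S. CX i j g * Z g \<omega>)" for i j \<omega>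
    by (simp add: Xdef CX_def sum_gordon_X_coeff a_def b_def)
  have Y_lincomb: "Y i j \<omega> = (\<Sum>g\<in>?S. CY i j g * Z g \<omega>)" for i j \<omega>
    by (simp add: Ydef CY_def sum_gordon_Y_coeff a_def b_def)
  have cov_X: "expectation (\<lambda>\<omega>. X i j \<omega> * X i' j' \<omega>) = (\<Sum>g\<in>?S. CX i j g * CX i' j' g)"
    for i j i' j'
    unfolding X_lincomb by (rule expectation_lincomb_mult[OF indep std finite_gidx_set])
  have cov_Y: "expectation (\<lambda>\<omega>. Y i j \<omega> * Y i' j' \<omega>) = (\<Sum>g\<in>?S. CY i j g * CY i' j' g)"
    for i j i' j'
    unfolding Y_lincomb by (rule expectation_lincomb_mult[OF indep std finite_gidx_set])
  have cov_le: "expectation (\<lambda>\<omega>. X i j \<omega> * X i' j' \<omega>) \<le> expectation (\<lambda>\<omega>. Y i j \<omega> * Y i' j' \<omega>)"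
    for i j i' j'
    unfolding cov_X cov_Y CX_def CY_def by (rule gordon_X_coeff_inner_le_Y)
  have cov_eq: "expectation (\<lambda>\<omega>. X i j \<omega> * X i' j' \<omega>) = expectation (\<lambda>\<omega>. Y i j \<omega> * Y i' j' \<omega>)"
    if "i = i' \<or> j = j'" for i j i' j'
    unfolding cov_X cov_Y CX_def CY_def using that by (intro gordon_X_coeff_inner_eq_Y) auto
  have "centered_gaussian_process M (I \<times> Pi\<^sub>E {1..k} J) (\<lambda>(i, j). X i j)"
    by (rule centered_gaussian_process_lincomb[OF indep std finite_gidx_set, where C = "\<lambda>(i, j). CX i j"])
      (auto simp: X_lincomb)
  moreover have "centered_gaussian_process M (I \<times> Pi\<^sub>E {1..k} J) (\<lambda>(i, j). Y i j)"
    by (rule centered_gaussian_process_lincomb[OF indep std finite_gidx_set, where C = "\<lambda>(i, j). CY i j"])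
      (auto simp: Y_lincomb)
  ultimately show ?thesis
    using cov_le cov_eq by (simp add: power2_eq_square)
qed

end
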